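(* Let $G$ be a $(P_2\cup P_4)$-free graph. Then $\chi(G)\le\frac{\omega(G)^3-\omega(G)^2+2\omega(G)}{2}$.
   Context: All graphs are finite, simple and undirected. $P_n$ is the path on $n$ vertices and $P_2\cup P_4$ is the disjoint union of $P_2$ and $P_4$. $G$ is $(P_2\cup P_4)$-free if it has no induced subgraph isomorphic to $P_2\cup P_4$. $\chi$ is the chromatic number and $\omega$ the clique number. *)

theory Defs
  imports Main
begin

definition simple_graph :: "'a set \<Rightarrow> ('a \<Rightarrow> 'a \<Rightarrow> bool) \<Rightarrow> bool" where
  "simple_graph V E \<longleftrightarrow> finite V \<and> (\<forall>x y. E x y \<longrightarrow> E y x) \<and> (\<forall>x. \<not> E x x)
     \<and> (\<forall>x y. E x y \<longrightarrow> x \<in> V \<and> y \<in> V)"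

definition contains_induced ::
  "'a set \<Rightarrow> ('a \<Rightarrow> 'a \<Rightarrow> bool) \<Rightarrow> 'b set \<Rightarrow> ('b \<Rightarrow> 'b \<Rightarrow> bool) \<Rightarrow> bool" where
  "contains_induced V E VH EH \<longleftrightarrow>
     (\<exists>\<phi>. inj_on \<phi> VH \<and> \<phi> ` VH \<subseteq> V \<and> (\<forall>x\<in>VH. \<forall>y\<in>VH. E (\<phi> x) (\<phi> y) \<longleftrightarrow> EH x y))"

definition P2_P4_verts :: "nat set" where
  "P2_P4_verts = {0..5}"

definition P2_P4_edge :: "nat \<Rightarrow> nat \<Rightarrow> bool" where
  "P2_P4_edge x y \<longleftrightarrow> {x, y} \<in> {{0,1}, {2,3}, {3,4}, {4,5}}"

definition P2_P4_free :: "'a set \<Rightarrow> ('a \<Rightarrow> 'a \<Rightarrow> bool) \<Rightarrow> bool" where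
  "P2_P4_free V E \<longleftrightarrow> \<not> contains_induced V E P2_P4_verts P2_P4_edge"

definition clique :: "'a set \<Rightarrow> ('a \<Rightarrow> 'a \<Rightarrow> bool) \<Rightarrow> 'a set \<Rightarrow> bool" where
  "clique V E K \<longleftrightarrow> K \<subseteq> V \<and> (\<forall>x\<in>K. \<forall>y\<in>K. x \<noteq> y \<longrightarrow> E x y)"

definition clique_number :: "'a set \<Rightarrow> ('a \<Rightarrow> 'a \<Rightarrow> bool) \<Rightarrow> nat" where
  "clique_number V E = Max (card ` {K. clique V E K})"

definition proper_colouring :: "'a set \<Rightarrow> ('a \<Rightarrow> 'a \<Rightarrow> bool) \<Rightarrow> nat \<Rightarrow> ('a \<Rightarrow> nat) \<Rightarrow> bool" where
  "proper_colouring V E k f \<longleftrightarrow> f ` V \<subseteq> {..<k} \<and> (\<forall>x\<in>V. \<forall>y\<in>V. E x y \<longrightarrow> f x \<noteq> f y)"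

definition chromatic_number :: "'a set \<Rightarrow> ('a \<Rightarrow> 'a \<Rightarrow> bool) \<Rightarrow> nat" where
  "chromatic_number V E = (LEAST k. \<exists>f. proper_colouring V E k f)"

end

theory Submission
  imports Defs
begin

text \<open>
  Let \<open>K\<close> be a maximum clique, of size \<open>\<omega>\<close>. Every vertex \<open>u\<close> misses some vertex of \<open>K\<close>,
  for otherwise \<open>K + u\<close> would be a larger clique. The vertices missing exactly the vertex
  \<open>k\<close> of \<open>K\<close> form an independent set: two adjacent ones together with \<open>K - k\<close> would be a
  clique of size \<open>\<omega> + 1\<close>. Every other vertex misses both ends of some edge \<open>ab\<close> of \<open>K\<close>;
  the common non-neighbourhood of \<open>ab\<close> is \<open>P\<^sub>4\<close>-free, since an induced \<open>P\<^sub>4\<close> there would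
  complete an induced \<open>P\<^sub>2 \<union> P\<^sub>4\<close> with \<open>ab\<close>. Since \<open>P\<^sub>4\<close>-free graphs are perfect, it can be
  coloured with \<open>\<omega>\<close> colours. Altogether \<open>\<chi> \<le> \<omega> + \<omega> \<cdot> (\<omega> choose 2)\<close>, which is the claimed bound.
\<close>

definition colourable :: "'a set \<Rightarrow> ('a \<Rightarrow> 'a \<Rightarrow> bool) \<Rightarrow> nat \<Rightarrow> bool" where
  "colourable V E k \<longleftrightarrow> (\<exists>f. proper_colouring V E k f)"

definition independent :: "'a set \<Rightarrow> ('a \<Rightarrow> 'a \<Rightarrow> bool) \<Rightarrow> 'a set \<Rightarrow> bool" where
  "independent V E S \<longleftrightarrow> S \<subseteq> V \<and> (\<forall>x\<in>S. \<forall>y\<in>S. \<not> E x y)"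

definition induced_P4 :: "('a \<Rightarrow> 'a \<Rightarrow> bool) \<Rightarrow> 'a \<Rightarrow> 'a \<Rightarrow> 'a \<Rightarrow> 'a \<Rightarrow> bool" where
  "induced_P4 E w x y z \<longleftrightarrow> E w x \<and> E x y \<and> E y z \<and> \<not> E w y \<and> \<not> E w z \<and> \<not> E x z"

definition P4_free :: "'a set \<Rightarrow> ('a \<Rightarrow> 'a \<Rightarrow> bool) \<Rightarrow> bool" where
  "P4_free V E \<longleftrightarrow> (\<forall>w\<in>V. \<forall>x\<in>V. \<forall>y\<in>V. \<forall>z\<in>V. \<not> induced_P4 E w x y z)"

lemma P4_free_subset: "P4_free V E \<Longrightarrow> W \<subseteq> V \<Longrightarrow> P4_free W E"
  unfolding P4_free_def by blast

lemma chromatic_number_le: "colourable V E k \<Longrightarrow> chromatic_number V E \<le> k"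
  unfolding colourable_def chromatic_number_def by (rule Least_le)

lemma colourable_subset: "colourable V E k \<Longrightarrow> W \<subseteq> V \<Longrightarrow> colourable W E k"
  unfolding colourable_def proper_colouring_def by (meson image_mono order_trans subsetD)

lemma colourable_empty: "colourable {} E 0"
  unfolding colourable_def proper_colouring_def by simp

lemma independent_colourable: "independent V E S \<Longrightarrow> colourable S E 1"
  unfolding colourable_def proper_colouring_def independent_def
  by (rule exI[of _ "\<lambda>_. 0"]) auto

lemma colourable_Un:
  assumes "colourable A E m" and "colourable B E n"
  shows "colourable (A \<union> B) E (m + n)"
proof -
  obtain f g where f: "proper_colouring A E m f" and g: "proper_colouring B E n g"
    using assms unfolding colourable_def by blast
  have f_lt: "f x < m" if "x \<in> A" for x
    using f that unfolding proper_colouring_def by blast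
  have g_lt: "g x < n" if "x \<in> B" for x
    using g that unfolding proper_colouring_def by blast
  define h where "h x = (if x \<in> A then f x else m + g x)" for x
  have "h ` (A \<union> B) \<subseteq> {..<m + n}"
    using f_lt g_lt unfolding h_def by (auto simp: image_subset_iff intro: trans_less_add1)
  moreover have "h x \<noteq> h y" if "x \<in> A \<union> B" "y \<in> A \<union> B" "E x y" for x y
  proof -
    have "f x \<noteq> f y" if "x \<in> A" "y \<in> A"
      using f that \<open>E x y\<close> unfolding proper_colouring_def by blast
    moreover have "g x \<noteq> g y" if "x \<in> B" "y \<in> B"
      using g that \<open>E x y\<close> unfolding proper_colouring_def by blast
    ultimately show ?thesis
      using that f_lt[of x] f_lt[of y] unfolding h_def by (cases "x \<in> A"; cases "y \<in> A") auto
  qed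
  ultimately have "proper_colouring (A \<union> B) E (m + n) h"
    unfolding proper_colouring_def by blast
  then show ?thesis
    unfolding colourable_def by blast
qed

lemma colourable_UN:
  assumes "finite I" and "\<And>i. i \<in> I \<Longrightarrow> colourable (A i) E (c i)"
  shows "colourable (\<Union>i\<in>I. A i) E (\<Sum>i\<in>I. c i)"
  using assms
proof (induction I rule: finite_induct)
  case empty
  show ?case
    using colourable_empty by simp
next
  case (insert i I)
  then have "colourable (A i \<union> (\<Union>j\<in>I. A j)) E (c i + (\<Sum>j\<in>I. c j))"
    by (simp add: colourable_Un)
  with insert.hyps show ?case
    by simp
qed

lemma exists_maximal_independent:
  assumes "finite V" and sym: "\<And>x y. E x y \<Longrightarrow> E y x" and irrefl: "\<And>x. \<not> E x x"
  obtains S where "independent V E S" and "\<And>v. v \<in> V - S \<Longrightarrow> \<exists>s\<in>S. E v s"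
proof -
  let ?A = "{S. independent V E S}"
  have "finite ?A"
    by (rule finite_subset[of _ "Pow V"]) (auto simp: independent_def \<open>finite V\<close>)
  moreover have "{} \<in> ?A"
    by (simp add: independent_def)
  ultimately obtain S where S: "S \<in> ?A" and max: "\<forall>T\<in>?A. S \<subseteq> T \<longrightarrow> S = T"
    using finite_has_maximal[of ?A] by blast
  have dominating: "\<exists>s\<in>S. E v s" if v: "v \<in> V - S" for v
  proof (rule ccontr)
    assume "\<not> ?thesis"
    then have "\<forall>s\<in>S. \<not> E v s \<and> \<not> E s v"
      using sym by blast
    then have "insert v S \<in> ?A"
      using S v irrefl unfolding independent_def by auto
    with max v show False
      by blast
  qed
  from S have "independent V E S"
    by simp
  from this dominating show ?thesis
    by (rule that)
qed

lemma exists_maximal_clique: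
  assumes "finite V" and sym: "\<And>x y. E x y \<Longrightarrow> E y x" and "clique V E C"
  obtains K where "C \<subseteq> K" and "clique V E K" and "\<And>v. v \<in> V - K \<Longrightarrow> \<exists>k\<in>K. \<not> E v k"
proof -
  let ?A = "{K. C \<subseteq> K \<and> clique V E K}"
  have "finite ?A"
    by (rule finite_subset[of _ "Pow V"]) (auto simp: clique_def \<open>finite V\<close>)
  moreover have "C \<in> ?A"
    using assms by simp
  ultimately obtain K where K: "K \<in> ?A" and max: "\<forall>T\<in>?A. K \<subseteq> T \<longrightarrow> K = T"
    using finite_has_maximal[of ?A] by blast
  have maximal: "\<exists>k\<in>K. \<not> E v k" if v: "v \<in> V - K" for v
  proof (rule ccontr)
    assume "\<not> ?thesis"
    then have "\<forall>k\<in>K. E v k \<and> E k v"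
      using sym by blast
    then have "insert v K \<in> ?A"
      using K v unfolding clique_def by auto
    with max v show False
      by blast
  qed
  from K have "C \<subseteq> K" "clique V E K"
    by simp_all
  from this maximal show ?thesis
    by (rule that)
qed

subsection \<open>Colouring \<open>P\<^sub>4\<close>-free graphs\<close>

text \<open>
  Take \<open>s \<in> S\<close> with the most neighbours in \<open>K\<close>. A vertex \<open>k\<^sub>1 \<in> K\<close> missed by \<open>s\<close> has a
  neighbour \<open>s' \<in> S\<close>, and \<open>s\<close> has a neighbour \<open>k\<^sub>2 \<in> K\<close> missed by \<open>s'\<close>, so that
  \<open>s k\<^sub>2 k\<^sub>1 s'\<close> is an induced \<open>P\<^sub>4\<close>.
\<close>
lemma P4_free_maximal_independent_meets_maximal_clique:
  assumes sym: "\<And>x y. E x y \<Longrightarrow> E y x" and "finite V" and "P4_free V E"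
    and K: "clique V E K" "K \<noteq> {}" and K_max: "\<And>v. v \<in> V - K \<Longrightarrow> \<exists>k\<in>K. \<not> E v k"
    and S: "independent V E S" and S_max: "\<And>v. v \<in> V - S \<Longrightarrow> \<exists>s\<in>S. E v s"
  shows "K \<inter> S \<noteq> {}"
proof
  assume disjoint: "K \<inter> S = {}"
  define deg where "deg s = card {k\<in>K. E s k}" for s
  have "finite K"
    using K \<open>finite V\<close> unfolding clique_def by (metis finite_subset)
  from K obtain k0 where "k0 \<in> K" by blast
  with K S_max disjoint obtain s0 where "s0 \<in> S"
    unfolding clique_def by blast
  have "\<forall>s. s \<in> S \<longrightarrow> deg s < card K + 1"
    unfolding deg_def using \<open>finite K\<close> by (simp add: card_mono le_imp_less_Suc)
  then obtain s where s: "s \<in> S" and s_max: "\<And>s'. s' \<in> S \<Longrightarrow> deg s' \<le> deg s"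
    using ex_has_greatest_nat[of "\<lambda>s. s \<in> S", OF \<open>s0 \<in> S\<close>] by blast
  have "s \<in> V - K"
    using s S disjoint unfolding independent_def by blast
  with K_max obtain k1 where k1: "k1 \<in> K" "\<not> E s k1" by blast
  have "k1 \<in> V - S"
    using k1 K disjoint unfolding clique_def by blast
  with S_max obtain s' where s': "s' \<in> S" "E k1 s'" by blast
  have "E s' k1"
    using s' sym by blast
  have "\<exists>k2\<in>K. E s k2 \<and> \<not> E s' k2"
  proof (rule ccontr)
    assume "\<not> ?thesis"
    then have "{k\<in>K. E s k} \<subset> {k\<in>K. E s' k}"
      using k1 \<open>E s' k1\<close> by blast
    then have "deg s < deg s'"
      unfolding deg_def using \<open>finite K\<close> by (simp add: psubset_card_mono)
    with s_max s' show False by fastforce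
  qed
  then obtain k2 where k2: "k2 \<in> K" "E s k2" "\<not> E s' k2" by blast
  have "k2 \<noteq> k1"
    using k1 k2 by blast
  then have "E k2 k1"
    using K k1 k2 unfolding clique_def by blast
  moreover have "\<not> E s s'"
    using S s s' unfolding independent_def by blast
  moreover have "\<not> E k2 s'"
    using k2 sym by blast
  ultimately have "induced_P4 E s k2 k1 s'"
    using k1 k2 s' unfolding induced_P4_def by blast
  moreover have "{s, k2, k1, s'} \<subseteq> V"
    using k1 k2 s s' K S unfolding clique_def independent_def by blast
  ultimately show False
    using \<open>P4_free V E\<close> unfolding P4_free_def by blast
qed

text \<open>Removing a maximal independent set lowers the clique number, since it meets every maximal clique.\<close>
lemma P4_free_colourable:
  assumes sym: "\<And>x y. E x y \<Longrightarrow> E y x" and irrefl: "\<And>x. \<not> E x x"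
    and "finite V" and "P4_free V E" and "\<And>C. clique V E C \<Longrightarrow> card C \<le> n"
  shows "colourable V E n"
  using assms(3-)
proof (induction n arbitrary: V)
  case 0
  have "V = {}"
  proof (rule ccontr)
    assume "V \<noteq> {}"
    then obtain v where "v \<in> V"
      by blast
    then have "clique V E {v}"
      by (simp add: clique_def)
    with "0.prems"(3) show False
      by fastforce
  qed
  then show ?case
    using colourable_empty by simp
next
  case (Suc n)
  obtain S where S: "independent V E S" and S_max: "\<And>v. v \<in> V - S \<Longrightarrow> \<exists>s\<in>S. E v s"
    using exists_maximal_independent[of V E, OF \<open>finite V\<close> sym irrefl] by blast
  have "card C \<le> n" if C: "clique (V - S) E C" for C
  proof (cases "C = {}")
    case False
    have "clique V E C"
      using C unfolding clique_def by blast
    then obtain K where K: "C \<subseteq> K" "clique V E K"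
      and K_max: "\<And>v. v \<in> V - K \<Longrightarrow> \<exists>k\<in>K. \<not> E v k"
      using exists_maximal_clique[of V E C, OF \<open>finite V\<close> sym] by blast
    have "K \<noteq> {}"
      using K(1) False by blast
    then have "K \<inter> S \<noteq> {}"
      using P4_free_maximal_independent_meets_maximal_clique[OF sym Suc.prems(1,2) K(2) _ K_max S S_max]
      by blast
    then obtain s where s: "s \<in> K" "s \<in> S" by blast
    have "s \<notin> C" "finite C"
      using s C \<open>finite V\<close> unfolding clique_def by (auto dest: finite_subset)
    moreover have "clique V E (insert s C)"
      using K s by (auto simp: clique_def)
    ultimately show ?thesis
      using Suc.prems(3) by fastforce
  qed simp
  moreover have "finite (V - S)" "P4_free (V - S) E"
    using Suc.prems(1,2) by (auto intro: P4_free_subset)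
  ultimately have "colourable (V - S) E n"
    using Suc.IH by blast
  moreover have "colourable S E 1"
    using S by (rule independent_colourable)
  ultimately have "colourable (S \<union> (V - S)) E (1 + n)"
    by (rule colourable_Un[rotated])
  then show ?case
    by (simp add: colourable_subset)
qed

subsection \<open>\<open>(P\<^sub>2 \<union> P\<^sub>4)\<close>-free graphs\<close>

lemma P2_P4_edge_iff:
  "P2_P4_edge i j \<longleftrightarrow> (i, j) \<in> {(0,1), (1,0), (2,3), (3,2), (3,4), (4,3), (4,5), (5,4)}"
  unfolding P2_P4_edge_def by (auto simp: doubleton_eq_iff)

lemma contains_P2_P4:
  assumes "simple_graph V E" and "{a, b, w, x, y, z} \<subseteq> V" and "E a b"
    and "\<forall>v\<in>{w, x, y, z}. \<not> E v a \<and> \<not> E v b" and "induced_P4 E w x y z"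
  shows "contains_induced V E P2_P4_verts P2_P4_edge"
proof -
  have sym: "\<And>u v. E u v \<Longrightarrow> E v u" and irrefl: "\<And>u. \<not> E u u"
    using \<open>simple_graph V E\<close> unfolding simple_graph_def by blast+
  note adj = assms(3-5)[unfolded induced_P4_def]
  have distinct: "distinct [a, b, w, x, y, z]"
    using adj sym irrefl by auto
  define \<phi> where "\<phi> i = [a, b, w, x, y, z] ! i" for i
  have verts: "P2_P4_verts = {0, 1, 2, 3, 4, 5}"
    unfolding P2_P4_verts_def by auto
  have "inj_on \<phi> P2_P4_verts"
    using distinct unfolding verts inj_on_def \<phi>_def by auto
  moreover have "\<phi> ` P2_P4_verts \<subseteq> V"
    using assms(2) unfolding verts \<phi>_def by auto
  moreover have "\<forall>i\<in>P2_P4_verts. \<forall>j\<in>P2_P4_verts. E (\<phi> i) (\<phi> j) \<longleftrightarrow> P2_P4_edge i j"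
    using adj sym irrefl unfolding verts \<phi>_def P2_P4_edge_iff by auto
  ultimately show ?thesis
    unfolding contains_induced_def by blast
qed

lemma P2_P4_free_common_non_neighbourhood_P4_free:
  assumes "simple_graph V E" and "P2_P4_free V E" and "E a b"
  shows "P4_free {v\<in>V. \<not> E v a \<and> \<not> E v b} E"
  unfolding P4_free_def
proof (intro ballI notI)
  fix w x y z
  assume "w \<in> {v\<in>V. \<not> E v a \<and> \<not> E v b}" "x \<in> {v\<in>V. \<not> E v a \<and> \<not> E v b}"
    "y \<in> {v\<in>V. \<not> E v a \<and> \<not> E v b}" "z \<in> {v\<in>V. \<not> E v a \<and> \<not> E v b}"
    and "induced_P4 E w x y z"
  moreover have "a \<in> V" "b \<in> V"
    using assms(1,3) unfolding simple_graph_def by blast+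
  ultimately have "contains_induced V E P2_P4_verts P2_P4_edge"
    using contains_P2_P4[OF assms(1) _ assms(3), of w x y z] by auto
  with assms(2) show False
    unfolding P2_P4_free_def by blast
qed

lemma finite_cliques: "finite V \<Longrightarrow> finite {K. clique V E K}"
  by (rule finite_subset[of _ "Pow V"]) (auto simp: clique_def)

lemma card_clique_le_clique_number:
  "finite V \<Longrightarrow> clique V E K \<Longrightarrow> card K \<le> clique_number V E"
  unfolding clique_number_def by (simp add: finite_cliques)

lemma exists_maximum_clique:
  assumes "finite V"
  obtains K where "clique V E K" and "card K = clique_number V E"
proof -
  have "clique V E {}"
    by (simp add: clique_def)
  then have "clique_number V E \<in> card ` {K. clique V E K}"
    unfolding clique_number_def using assms by (intro Max_in) (auto simp: finite_cliques)
  then obtain K where "clique V E K" "card K = clique_number V E"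
    by auto
  then show ?thesis
    by (rule that)
qed

lemma maximum_clique_non_neighbour:
  assumes "simple_graph V E" and K: "clique V E K" "card K = clique_number V E" and "u \<in> V"
  shows "\<exists>k\<in>K. \<not> E u k"
proof (rule ccontr)
  assume "\<not> ?thesis"
  then have "clique V E (insert u K)" and "u \<notin> K"
    using assms unfolding clique_def simple_graph_def by auto
  moreover have "finite K"
    using K assms(1) unfolding clique_def simple_graph_def by (metis finite_subset)
  ultimately show False
    using card_clique_le_clique_number[of V E "insert u K"] assms(1) K(2)
    unfolding simple_graph_def by simp
qed

lemma maximum_clique_unique_non_neighbour_independent:
  assumes "simple_graph V E" and K: "clique V E K" "card K = clique_number V E" and "k \<in> K"
  shows "independent V E {u\<in>V. {k'\<in>K. \<not> E u k'} = {k}}"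
  unfolding independent_def
proof (intro conjI ballI notI)
  fix u v
  assume u: "u \<in> {u\<in>V. {k'\<in>K. \<not> E u k'} = {k}}" and v: "v \<in> {u\<in>V. {k'\<in>K. \<not> E u k'} = {k}}"
    and "E u v"
  have sym: "\<And>x y. E x y \<Longrightarrow> E y x" and irrefl: "\<And>x. \<not> E x x"
    using assms(1) unfolding simple_graph_def by blast+
  let ?C = "insert u (insert v (K - {k}))"
  have "u \<notin> K - {k}" "v \<notin> K - {k}" "u \<noteq> v"
    using u v irrefl \<open>E u v\<close> by blast+
  moreover have "finite K"
    using K assms(1) unfolding clique_def simple_graph_def by (metis finite_subset)
  ultimately have "card ?C = clique_number V E + 1"
    using K(2) \<open>k \<in> K\<close> by (simp add: card_Diff_singleton) (metis Suc_pred card_gt_0_iff empty_iff)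
  moreover have "clique V E ?C"
    using K u v \<open>E u v\<close> sym unfolding clique_def by blast
  ultimately show False
    using card_clique_le_clique_number[of V E ?C] assms(1) unfolding simple_graph_def by simp
qed auto

lemma P2_P4_free_common_non_neighbourhood_colourable:
  assumes "simple_graph V E" and "P2_P4_free V E" and "E a b"
  shows "colourable {v\<in>V. \<not> E v a \<and> \<not> E v b} E (clique_number V E)"
proof -
  have "finite V" and sym: "\<And>x y. E x y \<Longrightarrow> E y x" and irrefl: "\<And>x. \<not> E x x"
    using assms(1) unfolding simple_graph_def by blast+
  have "card C \<le> clique_number V E" if "clique {v\<in>V. \<not> E v a \<and> \<not> E v b} E C" for C
    using that card_clique_le_clique_number[OF \<open>finite V\<close>, of E C] unfolding clique_def by blast
  then show ?thesis
    using P2_P4_free_common_non_neighbourhood_P4_free[OF assms] \<open>finite V\<close>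
    by (intro P4_free_colourable[OF sym irrefl]) auto
qed

lemma maximum_clique_non_neighbours_cover:
  assumes "simple_graph V E" and K: "clique V E K" "card K = clique_number V E"
  shows "V \<subseteq> (\<Union>k\<in>K. {u\<in>V. {k'\<in>K. \<not> E u k'} = {k}})
           \<union> (\<Union>P\<in>{P. P \<subseteq> K \<and> card P = 2}. {u\<in>V. \<forall>a\<in>P. \<not> E u a})"
proof
  fix u assume "u \<in> V"
  define N where "N = {k\<in>K. \<not> E u k}"
  have "finite K"
    using K assms(1) unfolding clique_def simple_graph_def by (metis finite_subset)
  then have "N \<noteq> {}" "finite N"
    using maximum_clique_non_neighbour[OF assms \<open>u \<in> V\<close>] unfolding N_def by auto
  then have "card N > 0"
    by (simp add: card_gt_0_iff)
  then consider "card N = 1" | "2 \<le> card N"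
    by linarith
  then show "u \<in> (\<Union>k\<in>K. {u\<in>V. {k'\<in>K. \<not> E u k'} = {k}})
           \<union> (\<Union>P\<in>{P. P \<subseteq> K \<and> card P = 2}. {u\<in>V. \<forall>a\<in>P. \<not> E u a})"
  proof cases
    case 1
    then obtain k where "N = {k}"
      by (rule card_1_singletonE)
    with \<open>u \<in> V\<close> show ?thesis
      unfolding N_def by blast
  next
    case 2
    then obtain P where "P \<subseteq> N" "card P = 2"
      by (rule obtain_subset_with_card_n)
    with \<open>u \<in> V\<close> show ?thesis
      unfolding N_def by blast
  qed
qed

lemma P2_P4_free_colourable:
  assumes "simple_graph V E" and "P2_P4_free V E"
  defines "\<omega> \<equiv> clique_number V E"
  shows "colourable V E (\<omega> + (\<omega> choose 2) * \<omega>)"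
proof -
  have "finite V"
    using assms(1) unfolding simple_graph_def by blast
  obtain K where K: "clique V E K" "card K = \<omega>"
    using exists_maximum_clique[OF \<open>finite V\<close>] unfolding \<omega>_def by metis
  have "finite K"
    using K \<open>finite V\<close> unfolding clique_def by (metis finite_subset)
  define pairs where "pairs = {P. P \<subseteq> K \<and> card P = 2}"
  have "finite pairs"
    unfolding pairs_def by (rule finite_subset[of _ "Pow K"]) (auto simp: \<open>finite K\<close>)
  have "colourable {u\<in>V. {k'\<in>K. \<not> E u k'} = {k}} E 1" if "k \<in> K" for k
    using maximum_clique_unique_non_neighbour_independent[OF assms(1) K[unfolded \<omega>_def] that]
    by (rule independent_colourable)
  then have "colourable (\<Union>k\<in>K. {u\<in>V. {k'\<in>K. \<not> E u k'} = {k}}) E (\<Sum>k\<in>K. 1)"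
    by (rule colourable_UN[OF \<open>finite K\<close>])
  moreover have "colourable (\<Union>P\<in>pairs. {u\<in>V. \<forall>a\<in>P. \<not> E u a}) E (\<Sum>P\<in>pairs. \<omega>)"
  proof (rule colourable_UN[OF \<open>finite pairs\<close>])
    fix P assume "P \<in> pairs"
    then obtain a b where P: "P = {a, b}" "a \<noteq> b" "a \<in> K" "b \<in> K"
      unfolding pairs_def by (auto simp: card_2_iff)
    then have "E a b"
      using K unfolding clique_def by blast
    then show "colourable {u\<in>V. \<forall>a\<in>P. \<not> E u a} E \<omega>"
      using P2_P4_free_common_non_neighbourhood_colourable[OF assms(1,2)]
      unfolding \<omega>_def P(1) by simp
  qed
  ultimately have "colourable ((\<Union>k\<in>K. {u\<in>V. {k'\<in>K. \<not> E u k'} = {k}})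
      \<union> (\<Union>P\<in>pairs. {u\<in>V. \<forall>a\<in>P. \<not> E u a})) E (\<omega> + card pairs * \<omega>)"
    using colourable_Un K(2) by fastforce
  then show ?thesis
    using maximum_clique_non_neighbours_cover[OF assms(1) K[unfolded \<omega>_def]]
    unfolding pairs_def n_subsets[OF \<open>finite K\<close>] K(2) by (rule colourable_subset)
qed

lemma twice_colour_bound: "2 * (w + (w choose 2) * w) = w ^ 3 - w ^ 2 + 2 * (w::nat)"
proof -
  have "2 * (w choose 2) = w * (w - 1)"
    unfolding choose_two by (cases w) auto
  moreover have "w ^ 3 - w ^ 2 = w * (w - 1) * w"
    by (simp add: power2_eq_square power3_eq_cube diff_mult_distrib algebra_simps)
  ultimately show ?thesis
    by (simp add: algebra_simps)
qed

theorem corollary4p3: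
  fixes V :: "'a set" and E :: "'a \<Rightarrow> 'a \<Rightarrow> bool"
  assumes "simple_graph V E" and "P2_P4_free V E"
  shows "2 * chromatic_number V E \<le>
           clique_number V E ^ 3 - clique_number V E ^ 2 + 2 * clique_number V E"
  using chromatic_number_le[OF P2_P4_free_colourable[OF assms]]
  by (simp only: twice_colour_bound[symmetric]) simp

end
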